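(* In the setting below, let $F_1,\dots,F_n\in K_w[\mathcal G\oplus\mathcal H]$ be nonzero, let $f_i$ be the initial term of $F_i$, and assume $j(F_1,\dots,F_n)\ne0$. Let $\Phi=\sum_{\mathbf k\in\mathbb Z^n}\phi_{\mathbf k}\mathbf x^{\mathbf k}$ be a formal series with coefficients $\phi_{\mathbf k}\in K_w[\mathcal G]$. Then $\Phi(x_1,\dots,x_n)\in K_w^{\mathbf f}[\mathcal G\oplus\mathcal H]$ if and only if $\Phi(f_1,\dots,f_n)=\sum_{\mathbf k}\phi_{\mathbf k}f_1^{k_1}\cdots f_n^{k_n}$ strictly converges in $K_w[\mathcal G\oplus\mathcal H]$; and if these equivalent conditions hold, then $\Phi(F_1,\dots,F_n)=\sum_{\mathbf k}\phi_{\mathbf k}F_1^{k_1}\cdots F_n^{k_n}$ strictly converges in $K_w[\mathcal G\oplus\mathcal H]$.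
   Context: $K$ is a field. A totally ordered abelian group (TOA-group) is an abelian group with a translation-invariant total order; for a TOA-group $\mathcal A$, $K_w[\mathcal A]$ is the field of formal series $\sum_{a\in\mathcal A}c_at^a$ ($c_a\in K$) with well-ordered support; $\mathrm{ord}$ of a nonzero series is the minimum of its support, and its initial term is the term of that order. A sum strictly converges if each coefficient receives contributions from only finitely many summands and the resulting series has well-ordered support. Setting: $\mathcal G,\mathcal H$ are abelian groups with $\mathcal H\cong\mathbb Z^n$ having basis $e_1,\dots,e_n$, and $\mathcal G\oplus\mathcal H$ carries a total order making it a TOA-group ($\mathcal G$ gets the induced order). Write $x_i=t^{e_i}$ and $\mathbf x^{\mathbf k}=x_1^{k_1}\cdots x_n^{k_n}$; every element of $K_w[\mathcal G\oplus\mathcal H]$ is $\sum_{\mathbf k\in\mathbb Z^n}b_{\mathbf k}\mathbf x^{\mathbf k}$ with $b_{\mathbf k}\in K_w[\mathcal G]$. The nonzero $b_{\mathbf k}\mathbf x^{\mathbf k}$ are its $x$-terms, and the $x$-initial term is the $x$-term of least order. If $F_i$ has $x$-initial term $a_i\mathbf x^{\mathbf b_i}$ with $\mathbf b_i=(b_{i1},\dots,b_{in})$, the Jacobian number is $j(F_1,\dots,F_n)=\det(b_{ij})$. For an injective endomorphism $\rho$ of $\mathcal G\oplus\mathcal H$, the order $\le^\rho$ is $a\le^\rho b\iff\rho(a)\le\rho(b)$, and $K_w^\rho[\mathcal G\oplus\mathcal H]$ is the field of formal series with support well-ordered with respect to $\le^\rho$. If the initial term of $F_i$ is $c_it^{g_i}\mathbf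 x^{\mathbf b_i}$ ($c_i\in K$, $g_i\in\mathcal G$), then $\mathbf f$ denotes the endomorphism of $\mathcal G\oplus\mathcal H$ fixing $\mathcal G$ pointwise with $e_i\mapsto g_i+\sum_jb_{ij}e_j$ (it is injective when $\det(b_{ij})\ne0$), and $K_w^{\mathbf f}=K_w^\rho$ for $\rho=\mathbf f$. *)

theory Defs
  imports "HOL-Analysis.Analysis"
begin

definition supp :: "('a \<Rightarrow> 'k::zero) \<Rightarrow> 'a set" where
  "supp s = {a. s a \<noteq> 0}"

definition wo_on :: "('a \<Rightarrow> 'a \<Rightarrow> bool) \<Rightarrow> 'a set \<Rightarrow> bool" where
  "wo_on le S \<longleftrightarrow> (\<forall>T\<subseteq>S. T \<noteq> {} \<longrightarrow> (\<exists>m\<in>T. \<forall>x\<in>T. le m x))"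

definition toa_order :: "('a::ab_group_add \<Rightarrow> 'a \<Rightarrow> bool) \<Rightarrow> bool" where
  "toa_order le \<longleftrightarrow> (\<forall>a. le a a) \<and> (\<forall>a b. le a b \<and> le b a \<longrightarrow> a = b)
     \<and> (\<forall>a b c. le a b \<and> le b c \<longrightarrow> le a c) \<and> (\<forall>a b. le a b \<or> le b a)
     \<and> (\<forall>a b c. le a b \<longrightarrow> le (a + c) (b + c))"

definition hahn :: "('a \<Rightarrow> 'a \<Rightarrow> bool) \<Rightarrow> ('a \<Rightarrow> 'k::zero) \<Rightarrow> bool" where
  "hahn le s \<longleftrightarrow> wo_on le (supp s)"

definition hone :: "'a::zero \<Rightarrow> 'k::{zero,one}" where
  "hone a = (if a = 0 then 1 else 0)"

text \<open>Cauchy product of formal series (finite sums for well-ordered supports).\<close>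
definition hmul :: "('a::ab_group_add \<Rightarrow> 'k::field) \<Rightarrow> ('a \<Rightarrow> 'k) \<Rightarrow> 'a \<Rightarrow> 'k" where
  "hmul s u a = (\<Sum>b\<in>{b. s b \<noteq> 0 \<and> u (a - b) \<noteq> 0}. s b * u (a - b))"

definition hinv :: "('a::ab_group_add \<Rightarrow> 'a \<Rightarrow> bool) \<Rightarrow> ('a \<Rightarrow> 'k::field) \<Rightarrow> 'a \<Rightarrow> 'k" where
  "hinv le s = (THE u. hahn le u \<and> hmul s u = hone)"

definition hpow :: "('a::ab_group_add \<Rightarrow> 'a \<Rightarrow> bool) \<Rightarrow> ('a \<Rightarrow> 'k::field) \<Rightarrow> int \<Rightarrow> 'a \<Rightarrow> 'k" where
  "hpow le s k = (if 0 \<le> k then (hmul s ^^ nat k) hone else (hmul (hinv le s) ^^ nat (- k)) hone)"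

definition hprod :: "('n::finite \<Rightarrow> 'a::ab_group_add \<Rightarrow> 'k::field) \<Rightarrow> 'a \<Rightarrow> 'k" where
  "hprod S a = (\<Sum>\<alpha>\<in>{\<alpha>. (\<Sum>i\<in>UNIV. \<alpha> i) = a \<and> (\<forall>i. S i (\<alpha> i) \<noteq> 0)}. \<Prod>i\<in>UNIV. S i (\<alpha> i))"

definition ord :: "('a \<Rightarrow> 'a \<Rightarrow> bool) \<Rightarrow> ('a \<Rightarrow> 'k::zero) \<Rightarrow> 'a" where
  "ord le s = (THE a. s a \<noteq> 0 \<and> (\<forall>b. s b \<noteq> 0 \<longrightarrow> le a b))"

definition init_term :: "('a \<Rightarrow> 'a \<Rightarrow> bool) \<Rightarrow> ('a \<Rightarrow> 'k::zero) \<Rightarrow> 'a \<Rightarrow> 'k" where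
  "init_term le s = (\<lambda>a. if a = ord le s then s a else 0)"

definition xterm :: "('g \<times> (int ^ 'n) \<Rightarrow> 'k::zero) \<Rightarrow> int ^ 'n \<Rightarrow> 'g \<times> (int ^ 'n) \<Rightarrow> 'k" where
  "xterm s k = (\<lambda>(g, k'). if k' = k then s (g, k) else 0)"

definition xinit_exp :: "('g \<times> (int ^ 'n) \<Rightarrow> 'g \<times> (int ^ 'n) \<Rightarrow> bool)
    \<Rightarrow> ('g \<times> (int ^ 'n) \<Rightarrow> 'k::zero) \<Rightarrow> int ^ 'n" where
  "xinit_exp le s = (THE k. xterm s k \<noteq> (\<lambda>_. 0) \<and>
      (\<forall>k'. xterm s k' \<noteq> (\<lambda>_. 0) \<longrightarrow> le (ord le (xterm s k)) (ord le (xterm s k'))))"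

definition jacobian_number :: "('g \<times> (int ^ 'n) \<Rightarrow> 'g \<times> (int ^ 'n) \<Rightarrow> bool)
    \<Rightarrow> ('n::finite \<Rightarrow> 'g \<times> (int ^ 'n) \<Rightarrow> 'k::zero) \<Rightarrow> int" where
  "jacobian_number le F = det (\<chi> i j. xinit_exp le (F i) $ j)"

definition zsmult :: "int \<Rightarrow> 'a::ab_group_add \<Rightarrow> 'a" where
  "zsmult k a = (if 0 \<le> k then (((+) a) ^^ nat k) 0 else - ((((+) a) ^^ nat (- k)) 0))"

text \<open>The endomorphism f of G \<oplus> Z^n: fixes G pointwise, e_i \<mapsto> g_i + \<Sum>_j b_ij e_j,
  where t^(g_i) x^(b_i) is the exponent of the initial term of F_i, i.e. (g_i, b_i) = ord F_i.\<close>
definition fmap :: "('g::ab_group_add \<times> (int ^ 'n) \<Rightarrow> 'g \<times> (int ^ 'n) \<Rightarrow> bool)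
    \<Rightarrow> ('n::finite \<Rightarrow> 'g \<times> (int ^ 'n) \<Rightarrow> 'k::zero) \<Rightarrow> 'g \<times> (int ^ 'n) \<Rightarrow> 'g \<times> (int ^ 'n)" where
  "fmap le F = (\<lambda>(g, k). (g, 0) + (\<Sum>i\<in>UNIV. zsmult (k $ i) (ord le (F i))))"

definition embG :: "('g \<Rightarrow> 'k::zero) \<Rightarrow> 'g \<times> (int ^ 'n) \<Rightarrow> 'k" where
  "embG \<phi> = (\<lambda>(g, k). if k = 0 then \<phi> g else 0)"

definition series_sum :: "('i \<Rightarrow> 'a \<Rightarrow> 'k::comm_monoid_add) \<Rightarrow> 'a \<Rightarrow> 'k" where
  "series_sum T a = (\<Sum>i\<in>{i. T i a \<noteq> 0}. T i a)"

definition strictly_converges :: "('a \<Rightarrow> 'a \<Rightarrow> bool) \<Rightarrow> ('i \<Rightarrow> 'a \<Rightarrow> 'k::comm_monoid_add) \<Rightarrow> bool" where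
  "strictly_converges le T \<longleftrightarrow> (\<forall>a. finite {i. T i a \<noteq> 0}) \<and> hahn le (series_sum T)"

definition subst_term :: "('g::ab_group_add \<times> (int ^ 'n) \<Rightarrow> 'g \<times> (int ^ 'n) \<Rightarrow> bool)
    \<Rightarrow> (int ^ 'n \<Rightarrow> 'g \<Rightarrow> 'k::field) \<Rightarrow> ('n::finite \<Rightarrow> 'g \<times> (int ^ 'n) \<Rightarrow> 'k)
    \<Rightarrow> int ^ 'n \<Rightarrow> 'g \<times> (int ^ 'n) \<Rightarrow> 'k" where
  "subst_term le \<phi> S k = hmul (embG (\<phi> k)) (hprod (\<lambda>i. hpow le (S i) (k $ i)))"

end

theory Submission
  imports Defs "HOL-Library.Set_Algebras"
begin

text \<open>
  Write \<open>F\<^sub>i = f\<^sub>i (1 + \<epsilon>\<^sub>i)\<close> with \<open>f\<^sub>i\<close> the initial term, so that every exponent of \<open>\<epsilon>\<^sub>i\<close> is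
  positive. Since the Jacobian number is nonzero, \<open>\<^bold>f\<close> is injective; hence the summands
  \<open>\<phi>\<^sub>k f\<^sup>k\<close> of \<open>\<Phi>(f)\<close>, which are translates of \<open>\<phi>\<^sub>k\<close>, have pairwise disjoint supports
  \<open>\<^bold>f(supp \<phi>\<^sub>k \<times> {k})\<close>, and \<open>\<Phi>(f)\<close> converges strictly iff \<open>\<^bold>f(supp \<Phi>)\<close> is well-ordered,
  i.e. iff \<open>supp \<Phi>\<close> is well-ordered for \<open>\<le>\<^sup>\<^bold>f\<close>. For \<open>\<Phi>(F)\<close>, every power \<open>F\<^sub>i\<^sup>k\<close>, negative
  ones included, is supported in \<open>\<^bold>f(0, k e\<^sub>i) + M\<close>, where \<open>M\<close> is the monoid generated by the
  exponents of all \<open>\<epsilon>\<^sub>i\<close>. By Neumann's lemma \<open>M\<close> is well-ordered, so all summands of \<open>\<Phi>(F)\<close>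
  live in the well-ordered set \<open>\<^bold>f(supp \<Phi>) + M\<close>, whose elements have only finitely many
  decompositions.
\<close>

section \<open>Well-ordered subsets of a totally ordered abelian group\<close>

lemma wo_on_subset: "wo_on le S \<Longrightarrow> T \<subseteq> S \<Longrightarrow> wo_on le T"
  unfolding wo_on_def by blast

lemma wo_on_pullback_iff: "wo_on (\<lambda>a b. le (f a) (f b)) S \<longleftrightarrow> wo_on le (f ` S)"
  unfolding wo_on_def
proof (intro iffI allI impI)
  fix T assume wo: "\<forall>T\<subseteq>S. T \<noteq> {} \<longrightarrow> (\<exists>m\<in>T. \<forall>x\<in>T. le (f m) (f x))"
    and T: "T \<subseteq> f ` S" "T \<noteq> {}"
  moreover have "S \<inter> f -` T \<subseteq> S" "S \<inter> f -` T \<noteq> {}" using T by auto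
  ultimately obtain m where "m \<in> S \<inter> f -` T" "\<forall>x\<in>S \<inter> f -` T. le (f m) (f x)"
    by meson
  then show "\<exists>m\<in>T. \<forall>x\<in>T. le m x" using T by (intro bexI[of _ "f m"]) auto
next
  fix T assume "\<forall>T\<subseteq>f ` S. T \<noteq> {} \<longrightarrow> (\<exists>m\<in>T. \<forall>x\<in>T. le m x)" "T \<subseteq> S" "T \<noteq> {}"
  then obtain m where "m \<in> f ` T" "\<forall>x\<in>f ` T. le m x"
    by (metis image_is_empty image_mono)
  then show "\<exists>m\<in>T. \<forall>x\<in>T. le (f m) (f x)" by auto
qed

locale toa =
  fixes le :: "'a::ab_group_add \<Rightarrow> 'a \<Rightarrow> bool"
  assumes refl: "le a a"
    and antisym: "le a b \<Longrightarrow> le b a \<Longrightarrow> a = b"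
    and trans: "le a b \<Longrightarrow> le b c \<Longrightarrow> le a c"
    and total: "le a b \<or> le b a"
    and add_right_mono: "le a b \<Longrightarrow> le (a + c) (b + c)"
begin

abbreviation lt where "lt a b \<equiv> le a b \<and> a \<noteq> b"

lemma add_mono: "le a b \<Longrightarrow> le c d \<Longrightarrow> le (a + c) (b + d)"
  by (metis add_right_mono add.commute trans)

lemma le_add_cancel_right: "le (a + c) (b + c) \<longleftrightarrow> le a b"
  using add_right_mono[of "a + c" "b + c" "- c"] add_right_mono[of a b c] by auto

lemma add_less_le_mono: "lt a b \<Longrightarrow> le c d \<Longrightarrow> lt (a + c) (b + d)"
proof -
  assume ab: "lt a b" and cd: "le c d"
  have "a + c \<noteq> b + d"
  proof
    assume eq: "a + c = b + d"
    have "le (b + c) (b + d)" using cd add_right_mono[of c d b] by (simp add: add.commute)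
    moreover have "le (b + d) (b + c)" using eq ab add_right_mono[of a b c] by simp
    ultimately have "c = d" using antisym[of "b + c" "b + d"] by simp
    then show False using eq ab by simp
  qed
  then show ?thesis using ab cd add_mono by blast
qed

lemma neg_le_neg: "le a b \<Longrightarrow> le (- b) (- a)"
  using add_right_mono[of a b "- a - b"] by (simp add: algebra_simps)

lemma neg_less_neg: "lt a b \<Longrightarrow> lt (- b) (- a)"
  using neg_le_neg[of a b] by auto

lemma diff_less_le_mono: "lt a b \<Longrightarrow> le c d \<Longrightarrow> lt (a - d) (b - c)"
  using add_less_le_mono[of a b "- d" "- c"] neg_le_neg by simp

lemma lt_trans: "lt a b \<Longrightarrow> lt b c \<Longrightarrow> lt a c"
  using trans antisym by blast

lemma wo_on_iff_wf: "wo_on le S \<longleftrightarrow> wf {(x, y). x \<in> S \<and> y \<in> S \<and> lt x y}"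
  (is "_ \<longleftrightarrow> wf ?R")
proof
  assume wo: "wo_on le S"
  show "wf ?R"
  proof (rule wfI_min)
    fix x :: 'a and Q assume "x \<in> Q"
    show "\<exists>z\<in>Q. \<forall>y. (y, z) \<in> ?R \<longrightarrow> y \<notin> Q"
    proof (cases "Q \<inter> S = {}")
      case False
      then obtain m where m: "m \<in> Q \<inter> S" "\<forall>y\<in>Q \<inter> S. le m y"
        using wo unfolding wo_on_def by (meson inf_le2)
      show ?thesis
      proof (intro bexI[of _ m] allI impI)
        fix y assume "(y, m) \<in> ?R"
        then have "le y m" "y \<noteq> m" "y \<in> S" by auto
        then show "y \<notin> Q" using m antisym[of m y] by blast
      qed (use m in blast)
    qed (use \<open>x \<in> Q\<close> in auto)
  qed
next
  assume wf: "wf ?R"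
  show "wo_on le S"
    unfolding wo_on_def
  proof (intro allI impI)
    fix T assume "T \<subseteq> S" "T \<noteq> {}"
    then obtain x where "x \<in> T" by blast
    then obtain m where m: "m \<in> T" "\<And>y. (y, m) \<in> ?R \<Longrightarrow> y \<notin> T"
      using wfE_min[OF wf] by blast
    have "le m y" if "y \<in> T" for y
    proof (rule ccontr)
      assume "\<not> le m y"
      then have "(y, m) \<in> ?R" using that m(1) \<open>T \<subseteq> S\<close> total[of m y] by auto
      then show False using m(2) that by blast
    qed
    then show "\<exists>m\<in>T. \<forall>x\<in>T. le m x" using m(1) by blast
  qed
qed

lemma wo_on_iff_no_descending_chain:
  "wo_on le S \<longleftrightarrow> (\<nexists>s. \<forall>n. s n \<in> S \<and> lt (s (Suc n)) (s n))"
  unfolding wo_on_iff_wf wf_iff_no_infinite_down_chain by auto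

lemma wo_on_no_descending_chain:
  "wo_on le S \<Longrightarrow> (\<And>n. s n \<in> S) \<Longrightarrow> (\<And>n. lt (s (Suc n)) (s n)) \<Longrightarrow> False"
  unfolding wo_on_iff_no_descending_chain by blast

lemma descending_chain_lt:
  assumes "\<And>n. lt (s (Suc n)) (s n)" and "i < j"
  shows "lt (s j) (s i)"
  using \<open>i < j\<close>
proof (induction j)
  case (Suc j)
  show ?case
  proof (cases "i = j")
    case False
    then have "lt (s j) (s i)" using Suc by simp
    then show ?thesis using assms(1)[of j] lt_trans by blast
  qed (use assms(1) in simp)
qed simp

lemma descending_chain_diff:
  assumes "\<And>n. lt (s (Suc n)) (s n)" and "strict_mono r" and "\<And>n. le (a (r n)) (a (r (Suc n)))"
  shows "lt (s (r (Suc n)) - a (r (Suc n))) (s (r n) - a (r n))"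
proof (rule diff_less_le_mono[OF _ assms(3)])
  show "lt (s (r (Suc n))) (s (r n))"
    using descending_chain_lt[of s, OF assms(1)] assms(2) by (simp add: strict_mono_def)
qed

lemma wo_on_translate: "wo_on le S \<Longrightarrow> wo_on le ((\<lambda>x. x + c) ` S)"
  by (subst wo_on_pullback_iff[symmetric]) (simp add: le_add_cancel_right)

lemma wo_on_Un:
  assumes A: "wo_on le A" and B: "wo_on le B"
  shows "wo_on le (A \<union> B)"
  unfolding wo_on_def
proof (intro allI impI)
  fix T assume T: "T \<subseteq> A \<union> B" "T \<noteq> {}"
  show "\<exists>m\<in>T. \<forall>x\<in>T. le m x"
  proof (cases "T \<inter> A = {} \<or> T \<inter> B = {}")
    case True
    then have "T \<subseteq> A \<or> T \<subseteq> B" using T by blast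
    then show ?thesis using A B T unfolding wo_on_def by blast
  next
    case False
    then obtain a b where a: "a \<in> T" "\<forall>x\<in>T \<inter> A. le a x" and b: "b \<in> T" "\<forall>x\<in>T \<inter> B. le b x"
      using A B unfolding wo_on_def by (metis IntD1 inf_le2)
    define m where "m = (if le a b then a else b)"
    have "m \<in> T" using a b by (simp add: m_def)
    moreover have "le m a" "le m b" using total[of a b] refl[of a] refl[of b] by (auto simp: m_def)
    then have "le m x" if "x \<in> T" for x
      using that T a(2) b(2) trans[of m a x] trans[of m b x] by blast
    ultimately show ?thesis by blast
  qed
qed

lemma wo_on_finite: "finite S \<Longrightarrow> wo_on le S"
proof (induction S rule: finite_induct)
  case empty
  then show ?case by (simp add: wo_on_def)
next
  case (insert x S)
  have "wo_on le {x}"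
    unfolding wo_on_def
  proof (intro allI impI)
    fix T assume "T \<subseteq> {x}" "T \<noteq> {}"
    then have "T = {x}" by blast
    then show "\<exists>m\<in>T. \<forall>y\<in>T. le m y" using refl[of x] by simp
  qed
  then have "wo_on le ({x} \<union> S)" by (rule wo_on_Un[OF _ insert.IH])
  then show ?case by simp
qed

lemma wo_on_finite_UN: "finite I \<Longrightarrow> (\<And>i. i \<in> I \<Longrightarrow> wo_on le (S i)) \<Longrightarrow> wo_on le (\<Union>i\<in>I. S i)"
  by (induction I rule: finite_induct) (simp_all add: wo_on_Un wo_on_finite)

lemma wo_on_nondecreasing_subseq:
  fixes s :: "nat \<Rightarrow> 'a"
  assumes wo: "wo_on le S" and sS: "\<And>n. s n \<in> S"
  shows "\<exists>r. strict_mono r \<and> (\<forall>n. le (s (r n)) (s (r (Suc n))))"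
proof -
  have "\<exists>j\<ge>N. \<forall>n\<ge>N. le (s j) (s n)" for N
  proof -
    have "{s n | n. n \<ge> N} \<subseteq> S" "{s n | n. n \<ge> N} \<noteq> {}" using sS by auto
    then obtain m where "m \<in> {s n | n. n \<ge> N}" "\<forall>x\<in>{s n | n. n \<ge> N}. le m x"
      using wo unfolding wo_on_def by meson
    then show ?thesis by auto
  qed
  then obtain least_from :: "nat \<Rightarrow> nat"
    where lf: "\<And>N. least_from N \<ge> N" "\<And>N n. n \<ge> N \<Longrightarrow> le (s (least_from N)) (s n)"
    by metis
  define r where "r = rec_nat (least_from 0) (\<lambda>_ p. least_from (Suc p))"
  have r_Suc: "r (Suc n) = least_from (Suc (r n))" for n by (simp add: r_def)
  have r: "strict_mono r"
    unfolding strict_mono_Suc_iff using lf(1) r_Suc by (metis Suc_le_lessD)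
  have r_least: "le (s (r n)) (s j)" if "j \<ge> r n" for n j
  proof (cases n)
    case 0
    then show ?thesis using lf(2) that by (simp add: r_def)
  next
    case (Suc m)
    then have "j \<ge> Suc (r m)" using lf(1)[of "Suc (r m)"] r_Suc[of m] that by simp
    then show ?thesis using lf(2) r_Suc[of m] Suc by simp
  qed
  have "le (s (r n)) (s (r (Suc n)))" for n
    using r r_least by (simp add: strict_mono_less_eq)
  with r show ?thesis by blast
qed

lemma wo_on_set_plus:
  assumes A: "wo_on le A" and B: "wo_on le B"
  shows "wo_on le (A + B)"
  unfolding wo_on_iff_no_descending_chain
proof
  assume "\<exists>s. \<forall>n. s n \<in> A + B \<and> lt (s (Suc n)) (s n)"
  then obtain s where sAB: "\<And>n. s n \<in> A + B" and dec: "\<And>n. lt (s (Suc n)) (s n)" by blast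
  have "\<exists>p. fst p \<in> A \<and> snd p \<in> B \<and> s n = fst p + snd p" for n
  proof -
    obtain a b where "a \<in> A" "b \<in> B" "s n = a + b" using sAB[of n] by (auto simp: set_plus_def)
    then show ?thesis by (intro exI[of _ "(a, b)"]) simp
  qed
  then obtain p where p: "\<forall>n. fst (p n) \<in> A \<and> snd (p n) \<in> B \<and> s n = fst (p n) + snd (p n)"
    using choice[of "\<lambda>n p. fst p \<in> A \<and> snd p \<in> B \<and> s n = fst p + snd p"] by blast
  define a where "a n = fst (p n)" for n
  define b where "b n = snd (p n)" for n
  have ab: "\<And>n. a n \<in> A" "\<And>n. b n \<in> B" "\<And>n. s n = a n + b n"
    using p by (simp_all add: a_def b_def)
  obtain r where r: "strict_mono r" "\<And>n. le (a (r n)) (a (r (Suc n)))"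
    using wo_on_nondecreasing_subseq[OF A, of a] ab(1) by blast
  have "lt (b (r (Suc n))) (b (r n))" for n
    using descending_chain_diff[of s r a, OF dec r] by (simp add: ab(3))
  then show False using wo_on_no_descending_chain[OF B, of "\<lambda>n. b (r n)"] ab(2) by blast
qed

lemma finite_decompositions:
  assumes A: "wo_on le A" and B: "wo_on le B"
  shows "finite {a \<in> A. x - a \<in> B}"
proof (rule ccontr)
  assume "infinite {a \<in> A. x - a \<in> B}"
  then obtain f :: "nat \<Rightarrow> 'a" where f: "inj f" "range f \<subseteq> {a \<in> A. x - a \<in> B}"
    using infinite_countable_subset by blast
  obtain r where r: "strict_mono r" "\<And>n. le (f (r n)) (f (r (Suc n)))"
    using wo_on_nondecreasing_subseq[OF A, of f] f(2) by blast
  have "lt (x - f (r (Suc n))) (x - f (r n))" for n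
  proof -
    have "f (r n) \<noteq> f (r (Suc n))"
      using f(1) r(1) by (metis inj_eq lessI less_irrefl strict_mono_def)
    then have "lt (- f (r (Suc n)) + x) (- f (r n) + x)"
      using add_less_le_mono[OF neg_less_neg refl] r(2) by blast
    then show ?thesis by (simp add: add.commute)
  qed
  moreover have "x - f (r n) \<in> B" for n using f(2) by auto
  ultimately show False using wo_on_no_descending_chain[OF B, of "\<lambda>n. x - f (r n)"] by blast
qed

end

lemma toa_if_toa_order: "toa_order le \<Longrightarrow> toa le"
  unfolding toa_order_def by unfold_locales blast+

section \<open>Neumann's lemma\<close>

definition add_monoid_gen :: "'a::monoid_add set \<Rightarrow> 'a set" where
  "add_monoid_gen E = {sum_list xs | xs. set xs \<subseteq> E}"

definition gen_length :: "'a::monoid_add set \<Rightarrow> 'a \<Rightarrow> nat" where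
  "gen_length E x = (LEAST n. \<exists>xs. set xs \<subseteq> E \<and> length xs = n \<and> sum_list xs = x)"

lemma zero_in_add_monoid_gen: "0 \<in> add_monoid_gen E"
  unfolding add_monoid_gen_def by (rule CollectI, rule exI[of _ "[]"]) simp

lemma generator_in_add_monoid_gen: "e \<in> E \<Longrightarrow> e \<in> add_monoid_gen E"
  unfolding add_monoid_gen_def by (rule CollectI, rule exI[of _ "[e]"]) simp

lemma add_in_add_monoid_gen:
  assumes "x \<in> add_monoid_gen E" "y \<in> add_monoid_gen E"
  shows "x + y \<in> add_monoid_gen E"
proof -
  obtain xs ys where "set xs \<subseteq> E" "set ys \<subseteq> E" "x = sum_list xs" "y = sum_list ys"
    using assms unfolding add_monoid_gen_def by blast
  then show ?thesis unfolding add_monoid_gen_def by (intro CollectI exI[of _ "xs @ ys"]) auto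
qed

lemma sum_in_add_monoid_gen:
  "finite I \<Longrightarrow> (\<And>i. i \<in> I \<Longrightarrow> f i \<in> add_monoid_gen E) \<Longrightarrow> sum f I \<in> add_monoid_gen E"
  by (induction I rule: finite_induct) (auto intro: add_in_add_monoid_gen zero_in_add_monoid_gen)

lemma add_monoid_gen_mono: "E \<subseteq> E' \<Longrightarrow> add_monoid_gen E \<subseteq> add_monoid_gen E'"
  unfolding add_monoid_gen_def by blast

lemma add_monoid_gen_split:
  assumes "x \<in> add_monoid_gen E" and "x \<noteq> 0"
  shows "\<exists>e\<in>E. \<exists>y\<in>add_monoid_gen E. x = e + y \<and> gen_length E y < gen_length E x"
proof -
  obtain xs where "set xs \<subseteq> E" "sum_list xs = x" using assms(1) unfolding add_monoid_gen_def by blast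
  then have "\<exists>ys. set ys \<subseteq> E \<and> length ys = length xs \<and> sum_list ys = x" by blast
  from LeastI[of "\<lambda>n. \<exists>ys. set ys \<subseteq> E \<and> length ys = n \<and> sum_list ys = x", OF this]
  obtain ys where ys: "set ys \<subseteq> E" "length ys = gen_length E x" "sum_list ys = x"
    unfolding gen_length_def by blast
  then obtain e zs where ys_eq: "ys = e # zs" using assms(2) by (cases ys) auto
  have "gen_length E (sum_list zs) \<le> length zs"
    unfolding gen_length_def using ys ys_eq by (intro Least_le) auto
  then show ?thesis using ys ys_eq
    by (intro bexI[of _ e] bexI[of _ "sum_list zs"]) (auto simp: add_monoid_gen_def)
qed

lemma minimal_descending_chain:
  fixes \<mu> :: "'a \<Rightarrow> nat"
  assumes "x \<in> B" and descend: "\<And>x. x \<in> B \<Longrightarrow> \<exists>y\<in>B. R y x"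
  shows "\<exists>t. (\<forall>n. t n \<in> B \<and> R (t (Suc n)) (t n)) \<and> (\<forall>z\<in>B. \<mu> (t 0) \<le> \<mu> z)
    \<and> (\<forall>n. \<forall>z\<in>B. R z (t n) \<longrightarrow> \<mu> (t (Suc n)) \<le> \<mu> z)"
proof -
  define next_of where "next_of x = arg_min \<mu> (\<lambda>y. y \<in> B \<and> R y x)" for x
  define t where "t = rec_nat (arg_min \<mu> (\<lambda>y. y \<in> B)) (\<lambda>_. next_of)"
  have t0: "t 0 \<in> B" "\<forall>z\<in>B. \<mu> (t 0) \<le> \<mu> z"
    using arg_min_nat_lemma[of "\<lambda>y. y \<in> B" x \<mu>] assms(1) by (simp_all add: t_def)
  have next_of: "next_of x \<in> B \<and> R (next_of x) x \<and> (\<forall>z\<in>B. R z x \<longrightarrow> \<mu> (next_of x) \<le> \<mu> z)"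
    if xB: "x \<in> B" for x
  proof -
    obtain y where "y \<in> B" "R y x" using descend[OF xB] by blast
    then show ?thesis
      using arg_min_nat_lemma[of "\<lambda>y. y \<in> B \<and> R y x" y \<mu>] unfolding next_of_def by auto
  qed
  have t_Suc: "t (Suc n) = next_of (t n)" for n by (simp add: t_def)
  have tB: "t n \<in> B" for n by (induction n) (use t0 next_of t_Suc in auto)
  show ?thesis
    using tB t0 next_of[OF tB] t_Suc by (intro exI[of _ t]) auto
qed

context toa
begin

lemma add_monoid_gen_nonneg:
  assumes "\<And>e. e \<in> E \<Longrightarrow> le 0 e" and "x \<in> add_monoid_gen E"
  shows "le 0 x"
proof -
  have "le 0 (sum_list xs)" if "set xs \<subseteq> E" for xs
    using that
  proof (induction xs)
    case Nil
    then show ?case using refl by simp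
  next
    case (Cons e xs)
    then show ?case using assms(1) add_mono[of 0 e 0 "sum_list xs"] by simp
  qed
  then show ?thesis using assms(2) unfolding add_monoid_gen_def by blast
qed

definition descent_starts :: "'a set \<Rightarrow> 'a set" where
  "descent_starts M = {x. \<exists>s. s 0 = x \<and> (\<forall>n. s n \<in> M \<and> lt (s (Suc n)) (s n))}"

lemma descent_starts_subset: "descent_starts M \<subseteq> M"
  unfolding descent_starts_def by blast

lemma wo_on_iff_descent_starts_empty: "wo_on le M \<longleftrightarrow> descent_starts M = {}"
  unfolding wo_on_iff_no_descending_chain descent_starts_def by blast

lemma descent_starts_descend: "x \<in> descent_starts M \<Longrightarrow> \<exists>y\<in>descent_starts M. lt y x"
proof -
  assume "x \<in> descent_starts M"
  then obtain s where s: "s 0 = x" "\<forall>n. s n \<in> M \<and> lt (s (Suc n)) (s n)"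
    unfolding descent_starts_def by blast
  then have "s 1 \<in> descent_starts M"
    unfolding descent_starts_def by (intro CollectI exI[of _ "\<lambda>n. s (Suc n)"]) auto
  then show ?thesis using s by (metis One_nat_def)
qed

lemma descent_starts_nonzero:
  assumes "\<And>e. e \<in> E \<Longrightarrow> le 0 e" and "x \<in> descent_starts (add_monoid_gen E)"
  shows "x \<noteq> 0"
proof
  assume "x = 0"
  obtain y where "y \<in> descent_starts (add_monoid_gen E)" "lt y x"
    using descent_starts_descend[OF assms(2)] by blast
  moreover from this(1) have "le 0 y"
    using add_monoid_gen_nonneg[OF assms(1)] descent_starts_subset by blast
  ultimately show False using \<open>x = 0\<close> antisym by blast
qed

text \<open>Nash-Williams' minimal bad sequence argument: choose a descending chain \<open>t\<close> in the
  monoid whose terms have, one after the other, the least possible generator length. Splitting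
  off one generator \<open>t n = e n + r n\<close> and passing to a subsequence along which the \<open>e n\<close> do
  not decrease leaves a descending chain of the \<open>r n\<close>, which starts below some \<open>t n\<close> with
  shorter length.\<close>

theorem wo_on_add_monoid_gen:
  assumes pos: "\<And>e. e \<in> E \<Longrightarrow> lt 0 e" and wo: "wo_on le E"
  shows "wo_on le (add_monoid_gen E)"
proof (rule ccontr)
  define M where "M = add_monoid_gen E"
  define B where "B = descent_starts M"
  assume "\<not> wo_on le (add_monoid_gen E)"
  then obtain x where "x \<in> B" unfolding wo_on_iff_descent_starts_empty B_def M_def by blast
  then obtain t where t: "\<forall>n. t n \<in> B \<and> lt (t (Suc n)) (t n)"
    and t_min0: "\<forall>z\<in>B. gen_length E (t 0) \<le> gen_length E z"
    and t_min: "\<forall>n. \<forall>z\<in>B. lt z (t n) \<longrightarrow> gen_length E (t (Suc n)) \<le> gen_length E z"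
    using minimal_descending_chain[of x B "\<lambda>y x. lt y x" "gen_length E"] descent_starts_descend
    unfolding B_def by blast
  have tB: "t n \<in> B" and t_dec: "lt (t (Suc n)) (t n)" and tM: "t n \<in> M" for n
    using t descent_starts_subset unfolding B_def by blast+
  have "t n \<noteq> 0" for n
    using descent_starts_nonzero[of E "t n"] pos tB[of n] unfolding B_def M_def by blast
  then have "\<exists>e\<in>E. \<exists>r\<in>M. t n = e + r \<and> gen_length E r < gen_length E (t n)" for n
    using add_monoid_gen_split tM unfolding M_def by blast
  then obtain e r where er: "\<And>n. e n \<in> E" "\<And>n. r n \<in> M" "\<And>n. t n = e n + r n"
    "\<And>n. gen_length E (r n) < gen_length E (t n)"
    by metis
  obtain \<phi> where \<phi>: "strict_mono \<phi>" "\<And>n. le (e (\<phi> n)) (e (\<phi> (Suc n)))"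
    using wo_on_nondecreasing_subseq[OF wo, of e] er(1) by blast
  have "lt (r (\<phi> (Suc n))) (r (\<phi> n))" for n
    using descending_chain_diff[of t \<phi> e, OF t_dec \<phi>] by (simp add: er(3))
  then have rB: "r (\<phi> 0) \<in> B"
    unfolding B_def descent_starts_def using er(2) by (intro CollectI exI[of _ "\<lambda>n. r (\<phi> n)"]) simp
  have r_lt: "lt (r (\<phi> 0)) (t (\<phi> 0))"
    using add_less_le_mono[of 0 "e (\<phi> 0)" "r (\<phi> 0)" "r (\<phi> 0)"] pos[OF er(1)] refl
      er(3)[of "\<phi> 0"] by simp
  show False
  proof (cases "\<phi> 0")
    case 0
    then show ?thesis using t_min0 rB er(4)[of "\<phi> 0"] by fastforce
  next
    case (Suc m)
    then have "lt (r (\<phi> 0)) (t m)" using lt_trans[OF r_lt] t_dec[of m] by simp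
    then show ?thesis using t_min rB er(4)[of "\<phi> 0"] Suc by fastforce
  qed
qed

end

section \<open>Monomials, orders and inverses in the Hahn field\<close>

definition hmonom :: "'k::zero \<Rightarrow> 'a \<Rightarrow> 'a \<Rightarrow> 'k" where
  "hmonom c a = (\<lambda>x. if x = a then c else 0)"

lemma hone_eq_hmonom: "hone = hmonom 1 0"
  unfolding hone_def hmonom_def by auto

lemma init_term_eq_hmonom: "init_term le s = hmonom (s (ord le s)) (ord le s)"
  unfolding init_term_def hmonom_def by auto

lemma hmul_nonzero_imp: "hmul s u x \<noteq> 0 \<Longrightarrow> \<exists>b. s b \<noteq> 0 \<and> u (x - b) \<noteq> 0"
  unfolding hmul_def by (metis (mono_tags, lifting) empty_Collect_eq sum.empty)

lemma hprod_nonzero_imp: "hprod S x \<noteq> 0 \<Longrightarrow> \<exists>\<alpha>. (\<Sum>i\<in>UNIV. \<alpha> i) = x \<and> (\<forall>i. S i (\<alpha> i) \<noteq> 0)"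
  unfolding hprod_def by (metis (mono_tags, lifting) empty_Collect_eq sum.empty)

lemma hmul_hmonom_left: "hmul (hmonom c a) u = (\<lambda>x. c * u (x - a))"
proof
  fix x
  have "{b. hmonom c a b \<noteq> 0 \<and> u (x - b) \<noteq> 0} = (if c * u (x - a) \<noteq> 0 then {a} else {})"
    by (auto simp: hmonom_def)
  then show "hmul (hmonom c a) u x = c * u (x - a)"
    unfolding hmul_def by (auto simp: hmonom_def)
qed

lemma hmul_hmonom_right: "hmul u (hmonom c a) = (\<lambda>x. u (x - a) * c)"
proof
  fix x
  have "{b. u b \<noteq> 0 \<and> hmonom c a (x - b) \<noteq> 0} = (if u (x - a) * c \<noteq> 0 then {x - a} else {})"
    by (auto simp: hmonom_def)
  then show "hmul u (hmonom c a) x = u (x - a) * c"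
    unfolding hmul_def by (auto simp: hmonom_def)
qed

lemma hmul_hmonom_power: "(hmul (hmonom c a) ^^ m) hone = hmonom (c ^ m) (((+) a ^^ m) 0)"
proof (induction m)
  case 0
  then show ?case by (simp add: hone_eq_hmonom)
next
  case (Suc m)
  have "(hmul (hmonom c a) ^^ Suc m) hone = hmul (hmonom c a) (hmonom (c ^ m) (((+) a ^^ m) 0))"
    by (simp add: Suc)
  also have "\<dots> = hmonom (c ^ Suc m) (((+) a ^^ Suc m) 0)"
    unfolding hmul_hmonom_left by (auto simp: hmonom_def fun_eq_iff algebra_simps)
  finally show ?case .
qed

lemma hprod_hmonom: "hprod (\<lambda>i. hmonom (C i) (p i)) = hmonom (\<Prod>i\<in>UNIV. C i) (\<Sum>i\<in>UNIV. p i)"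
proof
  fix x :: 'a
  have "(\<forall>i. hmonom (C i) (p i) (\<alpha> i) \<noteq> 0) \<longleftrightarrow> \<alpha> = p \<and> (\<forall>i. C i \<noteq> 0)" for \<alpha>
    by (auto simp: hmonom_def fun_eq_iff)
  then have "{\<alpha>. (\<Sum>i\<in>UNIV. \<alpha> i) = x \<and> (\<forall>i. hmonom (C i) (p i) (\<alpha> i) \<noteq> 0)} =
      (if (\<Sum>i\<in>UNIV. p i) = x \<and> (\<forall>i. C i \<noteq> 0) then {p} else {})"
    by auto
  then show "hprod (\<lambda>i. hmonom (C i) (p i)) x = hmonom (\<Prod>i\<in>UNIV. C i) (\<Sum>i\<in>UNIV. p i) x"
    unfolding hprod_def by (auto simp: hmonom_def)
qed

lemma hmul_translate: "hmul s (\<lambda>z. v (z + a)) = hmul (\<lambda>e. s (a + e)) v"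
proof
  fix x
  have supp_eq: "{b. s b \<noteq> 0 \<and> v (x - b + a) \<noteq> 0}
      = (\<lambda>e. a + e) ` {e. s (a + e) \<noteq> 0 \<and> v (x - e) \<noteq> 0}"
    by (force simp: algebra_simps intro: image_eqI[of _ _ "_ - a"])
  show "hmul s (\<lambda>z. v (z + a)) x = hmul (\<lambda>e. s (a + e)) v x"
    unfolding hmul_def supp_eq by (subst sum.reindex) (auto simp: inj_on_def algebra_simps)
qed

lemma funpow_plus_neg: "((+) (- a) ^^ m) (0::'a::ab_group_add) = - (((+) a ^^ m) 0)"
  by (induction m) (auto simp: algebra_simps)

context toa
begin

lemma ord_eqI: "s m \<noteq> 0 \<Longrightarrow> (\<And>b. s b \<noteq> 0 \<Longrightarrow> le m b) \<Longrightarrow> ord le s = m"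
  unfolding ord_def by (rule the_equality) (auto intro: antisym)

lemma ord_least:
  assumes "hahn le s" and "s b \<noteq> 0"
  shows "s (ord le s) \<noteq> 0" and "le (ord le s) b"
proof -
  have "supp s \<noteq> {}" using assms(2) by (auto simp: supp_def)
  then obtain m where "m \<in> supp s" "\<forall>x\<in>supp s. le m x"
    using assms(1) unfolding hahn_def wo_on_def by blast
  then have "s m \<noteq> 0" "\<And>b. s b \<noteq> 0 \<Longrightarrow> le m b" by (auto simp: supp_def)
  moreover from this have "ord le s = m" by (rule ord_eqI)
  ultimately show "s (ord le s) \<noteq> 0" "le (ord le s) b" using assms(2) by auto
qed

lemma coeff_ord_nonzero: "hahn le s \<Longrightarrow> s \<noteq> (\<lambda>_. 0) \<Longrightarrow> s (ord le s) \<noteq> 0"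
  using ord_least(1) by blast

lemma hahn_hmonom: "hahn le (hmonom c p)"
  unfolding hahn_def by (rule wo_on_finite, rule finite_subset[of _ "{p}"]) (auto simp: supp_def hmonom_def)

lemma ord_hmonom: "c \<noteq> 0 \<Longrightarrow> ord le (hmonom c p) = p"
  by (rule ord_eqI) (auto simp: hmonom_def refl split: if_splits)

lemma ord_init_term: "hahn le s \<Longrightarrow> s \<noteq> (\<lambda>_. 0) \<Longrightarrow> ord le (init_term le s) = ord le s"
  unfolding init_term_eq_hmonom by (rule ord_hmonom, rule coeff_ord_nonzero)

lemma init_term_nonzero: "hahn le s \<Longrightarrow> s \<noteq> (\<lambda>_. 0) \<Longrightarrow> init_term le s \<noteq> (\<lambda>_. 0)"
  unfolding init_term_def by (metis coeff_ord_nonzero)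

lemma hmul_finite_support:
  "hahn le s \<Longrightarrow> hahn le u \<Longrightarrow> finite {b. s b \<noteq> 0 \<and> u (x - b) \<noteq> 0}"
  using finite_decompositions[of "supp s" "supp u" x] by (simp add: hahn_def supp_def)

lemma hmul_eq_sum:
  assumes "finite U" and "{b. s b \<noteq> 0 \<and> u (x - b) \<noteq> 0} \<subseteq> U"
  shows "hmul s u x = (\<Sum>b\<in>U. s b * u (x - b))"
  unfolding hmul_def using assms by (intro sum.mono_neutral_left) auto

lemma hahn_diff:
  fixes u v :: "'a \<Rightarrow> 'k::ab_group_add"
  shows "hahn le u \<Longrightarrow> hahn le v \<Longrightarrow> hahn le (\<lambda>y. u y - v y)"
proof -
  have "supp (\<lambda>y. u y - v y) \<subseteq> supp u \<union> supp v" by (auto simp: supp_def)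
  then show "hahn le u \<Longrightarrow> hahn le v \<Longrightarrow> hahn le (\<lambda>y. u y - v y)"
    unfolding hahn_def using wo_on_Un wo_on_subset by blast
qed

lemma hmul_diff_right:
  fixes s :: "'a \<Rightarrow> 'k::field"
  assumes "hahn le s" "hahn le u" "hahn le v"
  shows "hmul s (\<lambda>y. u y - v y) x = hmul s u x - hmul s v x"
proof -
  define U where "U = {b. s b \<noteq> 0 \<and> u (x - b) \<noteq> 0} \<union> {b. s b \<noteq> 0 \<and> v (x - b) \<noteq> 0}"
  have U: "finite U" unfolding U_def using hmul_finite_support assms by blast
  have "hmul s (\<lambda>y. u y - v y) x = (\<Sum>b\<in>U. s b * (u (x - b) - v (x - b)))"
    by (rule hmul_eq_sum[OF U]) (auto simp: U_def)
  also have "\<dots> = (\<Sum>b\<in>U. s b * u (x - b)) - (\<Sum>b\<in>U. s b * v (x - b))"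
    by (simp add: algebra_simps sum_subtractf)
  also have "\<dots> = hmul s u x - hmul s v x"
    using hmul_eq_sum[OF U, of s u x] hmul_eq_sum[OF U, of s v x] by (auto simp: U_def)
  finally show ?thesis .
qed

lemma hmul_ord_nonzero:
  fixes s :: "'a \<Rightarrow> 'k::field"
  assumes s: "hahn le s" "s \<noteq> (\<lambda>_. 0)" and w: "hahn le w" "w \<noteq> (\<lambda>_. 0)"
  shows "hmul s w (ord le s + ord le w) \<noteq> 0"
proof -
  let ?a = "ord le s" and ?m = "ord le w"
  have "{b. s b \<noteq> 0 \<and> w (?a + ?m - b) \<noteq> 0} = {?a}"
  proof (intro equalityI subsetI)
    fix b assume "b \<in> {b. s b \<noteq> 0 \<and> w (?a + ?m - b) \<noteq> 0}"
    then have "le ?a b" and "le ?m (?a + ?m - b)" using ord_least s(1) w(1) by auto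
    then have "le b ?a" using add_right_mono[of ?m "?a + ?m - b" "b - ?m"] by (simp add: algebra_simps)
    then show "b \<in> {?a}" using \<open>le ?a b\<close> antisym by auto
  qed (use coeff_ord_nonzero s w in auto)
  then show ?thesis unfolding hmul_def using coeff_ord_nonzero[OF s] coeff_ord_nonzero[OF w] by simp
qed

lemma hinv_eqI:
  fixes s :: "'a \<Rightarrow> 'k::field"
  assumes s: "hahn le s" "s \<noteq> (\<lambda>_. 0)" and u: "hahn le u" "hmul s u = hone"
  shows "hinv le s = u"
  unfolding hinv_def
proof (rule the_equality)
  fix u' assume u': "hahn le u' \<and> hmul s u' = hone"
  show "u' = u"
  proof (rule ccontr)
    assume "u' \<noteq> u"
    then have "(\<lambda>y. u' y - u y) \<noteq> (\<lambda>_. 0)" by (auto simp: fun_eq_iff)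
    moreover have "hmul s (\<lambda>y. u' y - u y) x = 0" for x
      using hmul_diff_right[OF s(1) _ u(1)] u u' by simp
    ultimately show False using hmul_ord_nonzero[OF s hahn_diff] u u' by blast
  qed
qed (use u in blast)

end

text \<open>For \<open>s = c t\<^sup>a (1 + \<epsilon>)\<close> with initial term \<open>c t\<^sup>a\<close>, this is the support of \<open>\<epsilon>\<close>.\<close>

definition tail_supp :: "('a::ab_group_add \<Rightarrow> 'a \<Rightarrow> bool) \<Rightarrow> ('a \<Rightarrow> 'k::zero) \<Rightarrow> 'a set" where
  "tail_supp le s = (\<lambda>b. b - ord le s) ` supp s - {0}"

context toa
begin

lemma tail_supp_pos: "hahn le s \<Longrightarrow> e \<in> tail_supp le s \<Longrightarrow> lt 0 e"
  unfolding tail_supp_def supp_def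
  using ord_least(2) le_add_cancel_right[of 0 "ord le s"] by fastforce

lemma wo_on_tail_supp: "hahn le s \<Longrightarrow> wo_on le (tail_supp le s)"
  unfolding tail_supp_def hahn_def
  by (rule wo_on_subset[OF wo_on_translate[of _ "- ord le s"]]) auto

lemma series_support: "s z \<noteq> 0 \<Longrightarrow> z - ord le s \<in> add_monoid_gen (tail_supp le s)"
  by (cases "z - ord le s = 0")
    (auto simp: tail_supp_def supp_def intro: zero_in_add_monoid_gen generator_in_add_monoid_gen)

lemma wo_on_recursion:
  fixes H :: "('a \<Rightarrow> 'b::zero) \<Rightarrow> 'a \<Rightarrow> 'b"
  assumes "wo_on le M"
    and H: "\<And>v w m. m \<in> M \<Longrightarrow> (\<And>y. y \<in> M \<Longrightarrow> lt y m \<Longrightarrow> v y = w y) \<Longrightarrow> H v m = H w m"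
  shows "\<exists>v. \<forall>m. v m = (if m \<in> M then H v m else 0)"
proof -
  define R where "R = {(y, x). y \<in> M \<and> x \<in> M \<and> lt y x}"
  have "wf R" using assms(1) unfolding R_def wo_on_iff_wf .
  define v where "v = wfrec R (\<lambda>v m. if m \<in> M then H v m else 0)"
  have "v m = (if m \<in> M then H v m else 0)" for m
  proof -
    have "v m = (if m \<in> M then H (cut v R m) m else 0)"
      unfolding v_def by (subst wfrec[OF \<open>wf R\<close>]) simp
    also have "\<dots> = (if m \<in> M then H v m else 0)"
      using H[of m "cut v R m" v] by (auto simp: cut_apply R_def)
    finally show ?thesis .
  qed
  then show ?thesis by blast
qed

text \<open>Writing \<open>u z = v (z + a)\<close> with \<open>a = ord s\<close>, the coefficient of \<open>t\<^sup>m\<close> in \<open>s u\<close> is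
  \<open>s\<^sub>a v(m) + (\<Sum>e > 0. s\<^sub>a\<^sub>+\<^sub>e v(m - e))\<close>, so \<open>s u = 1\<close> determines \<open>v\<close> by well-founded recursion
  over the well-ordered monoid generated by the tail exponents.\<close>

lemma hmul_eq_hone_if_recursive:
  fixes s :: "'a \<Rightarrow> 'k::field"
  assumes hs: "hahn le s" and nz: "s \<noteq> (\<lambda>_. 0)"
  defines "a \<equiv> ord le s" and "M \<equiv> add_monoid_gen (tail_supp le s)"
  defines "D m \<equiv> {e \<in> tail_supp le s. m - e \<in> M}"
  assumes v: "\<And>m. v m = (if m \<in> M then (hone m - (\<Sum>e\<in>D m. s (a + e) * v (m - e))) / s a else 0)"
  shows "hmul s (\<lambda>z. v (z + a)) = hone"
proof
  fix x
  have c: "s a \<noteq> 0" using coeff_ord_nonzero[OF hs nz] by (simp add: a_def)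
  have "finite (D x)"
    unfolding D_def M_def
    using finite_decompositions[OF wo_on_tail_supp[OF hs] wo_on_add_monoid_gen] tail_supp_pos[OF hs]
      wo_on_tail_supp[OF hs] by blast
  define Se where "Se = {e. s (a + e) \<noteq> 0 \<and> v (x - e) \<noteq> 0}"
  have "hmul s (\<lambda>z. v (z + a)) x = (\<Sum>e\<in>Se. s (a + e) * v (x - e))"
    by (simp add: hmul_translate hmul_def Se_def)
  also have "\<dots> = hone x"
  proof (cases "x \<in> M")
    case True
    have "Se \<subseteq> insert 0 (D x)"
      using v by (force simp: Se_def D_def tail_supp_def supp_def a_def)
    then have "(\<Sum>e\<in>Se. s (a + e) * v (x - e)) = (\<Sum>e\<in>insert 0 (D x). s (a + e) * v (x - e))"
      using \<open>finite (D x)\<close> by (intro sum.mono_neutral_left) (auto simp: Se_def)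
    also have "\<dots> = s a * v x + (\<Sum>e\<in>D x. s (a + e) * v (x - e))"
      using \<open>finite (D x)\<close> by (simp add: D_def tail_supp_def)
    also have "\<dots> = hone x" using v[of x] True c by simp
    finally show ?thesis .
  next
    case False
    have "Se = {}"
    proof (rule ccontr)
      assume "Se \<noteq> {}"
      then obtain e where "s (a + e) \<noteq> 0" "v (x - e) \<noteq> 0" unfolding Se_def by auto
      then have "e \<in> M" "x - e \<in> M" using series_support[of s "a + e"] v[of "x - e"]
        by (auto simp: a_def M_def split: if_splits)
      then show False using False add_in_add_monoid_gen[of e _ "x - e"] by (auto simp: M_def)
    qed
    moreover have "x \<noteq> 0" using False zero_in_add_monoid_gen by (auto simp: M_def)
    ultimately show ?thesis by (simp add: hone_def)
  qed
  finally show "hmul s (\<lambda>z. v (z + a)) x = hone x" .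
qed

lemma hinv_exists:
  fixes s :: "'a \<Rightarrow> 'k::field"
  assumes hs: "hahn le s" and nz: "s \<noteq> (\<lambda>_. 0)"
  shows "\<exists>u. hahn le u \<and> hmul s u = hone
    \<and> (\<forall>z. u z \<noteq> 0 \<longrightarrow> z + ord le s \<in> add_monoid_gen (tail_supp le s))"
proof -
  define a where "a = ord le s"
  define M where "M = add_monoid_gen (tail_supp le s)"
  define D where "D m = {e \<in> tail_supp le s. m - e \<in> M}" for m
  have woM: "wo_on le M"
    unfolding M_def using wo_on_add_monoid_gen tail_supp_pos[OF hs] wo_on_tail_supp[OF hs] by blast
  have "\<exists>v. \<forall>m. v m = (if m \<in> M then (hone m - (\<Sum>e\<in>D m. s (a + e) * v (m - e))) / s a else 0)"
  proof (rule wo_on_recursion[OF woM])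
    fix v w :: "'a \<Rightarrow> 'k" and m
    assume "\<And>y. y \<in> M \<Longrightarrow> lt y m \<Longrightarrow> v y = w y"
    moreover have "lt (m - e) m" if "e \<in> D m" for e
      using add_less_le_mono[OF neg_less_neg[OF tail_supp_pos[OF hs]] refl, of e m] that
      by (simp add: D_def)
    ultimately show "(hone m - (\<Sum>e\<in>D m. s (a + e) * v (m - e))) / s a
        = (hone m - (\<Sum>e\<in>D m. s (a + e) * w (m - e))) / s a"
      by (auto simp: D_def intro!: sum.cong)
  qed
  then obtain v where v: "\<And>m. v m = (if m \<in> M then (hone m - (\<Sum>e\<in>D m. s (a + e) * v (m - e))) / s a else 0)"
    by blast
  have "hahn le (\<lambda>z. v (z + a))"
  proof -
    have "supp (\<lambda>z. v (z + a)) \<subseteq> (\<lambda>x. x + - a) ` M"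
      using v by (force simp: supp_def split: if_splits intro: image_eqI[of _ _ "_ + a"])
    then show ?thesis unfolding hahn_def using wo_on_translate[OF woM] wo_on_subset by blast
  qed
  moreover have "hmul s (\<lambda>z. v (z + a)) = hone"
    using hmul_eq_hone_if_recursive[OF hs nz v[unfolded a_def M_def D_def]] by (simp add: a_def)
  moreover have "v m \<noteq> 0 \<Longrightarrow> m \<in> M" for m by (cases "m \<in> M") (use v[of m] in auto)
  ultimately show ?thesis unfolding a_def M_def by blast
qed

lemma hinv_support:
  fixes s :: "'a \<Rightarrow> 'k::field"
  assumes "hahn le s" and "s \<noteq> (\<lambda>_. 0)" and "hinv le s z \<noteq> 0"
  shows "z + ord le s \<in> add_monoid_gen (tail_supp le s)"
  using hinv_exists[OF assms(1,2)] hinv_eqI[OF assms(1,2)] assms(3) by metis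

lemma hinv_hmonom:
  fixes c :: "'k::field"
  assumes "c \<noteq> 0"
  shows "hinv le (hmonom c p) = hmonom (inverse c) (- p)"
proof (rule hinv_eqI[OF hahn_hmonom _ hahn_hmonom])
  show "hmonom c p \<noteq> (\<lambda>_. 0)" using assms by (auto simp: hmonom_def fun_eq_iff)
  show "hmul (hmonom c p) (hmonom (inverse c) (- p)) = hone"
    unfolding hmul_hmonom_left using assms by (auto simp: hmonom_def hone_def fun_eq_iff)
qed

lemma hpow_hmonom:
  fixes c :: "'k::field"
  assumes "c \<noteq> 0"
  shows "hpow le (hmonom c p) k = hmonom (c powi k) (zsmult k p)"
  using assms
  by (auto simp: hpow_def zsmult_def power_int_def hmul_hmonom_power hinv_hmonom funpow_plus_neg)

end

lemma hmul_power_support: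
  assumes "\<And>z. s z \<noteq> 0 \<Longrightarrow> z - p \<in> add_monoid_gen E"
  shows "(hmul s ^^ m) hone z \<noteq> 0 \<Longrightarrow> z - ((+) p ^^ m) 0 \<in> add_monoid_gen E"
proof (induction m arbitrary: z)
  case 0
  then show ?case by (simp add: hone_def zero_in_add_monoid_gen split: if_splits)
next
  case (Suc m)
  then obtain b where "s b \<noteq> 0" "(hmul s ^^ m) hone (z - b) \<noteq> 0"
    using hmul_nonzero_imp by fastforce
  then have "(b - p) + (z - b - ((+) p ^^ m) 0) \<in> add_monoid_gen E"
    using assms Suc.IH add_in_add_monoid_gen by blast
  moreover have "(b - p) + (z - b - ((+) p ^^ m) 0) = z - ((+) p ^^ Suc m) 0"
    by (simp add: algebra_simps)
  ultimately show ?case by simp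
qed

lemma hprod_support:
  assumes "\<And>i z. S i z \<noteq> 0 \<Longrightarrow> z - p i \<in> add_monoid_gen E" and "hprod S z \<noteq> 0"
  shows "z - (\<Sum>i\<in>UNIV. p i) \<in> add_monoid_gen E"
proof -
  obtain \<alpha> where "(\<Sum>i\<in>UNIV. \<alpha> i) = z" "\<And>i. S i (\<alpha> i) \<noteq> 0"
    using hprod_nonzero_imp[OF assms(2)] by blast
  moreover have "(\<Sum>i\<in>UNIV. \<alpha> i - p i) \<in> add_monoid_gen E"
    using calculation(2) by (intro sum_in_add_monoid_gen assms(1)) auto
  ultimately show ?thesis by (simp add: sum_subtractf)
qed

lemma (in toa) hpow_support:
  fixes s :: "'a \<Rightarrow> 'k::field"
  assumes "hahn le s" and "s \<noteq> (\<lambda>_. 0)" and "hpow le s k z \<noteq> 0"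
  shows "z - zsmult k (ord le s) \<in> add_monoid_gen (tail_supp le s)"
proof (cases "0 \<le> k")
  case True
  then show ?thesis
    using hmul_power_support[of s "ord le s" "tail_supp le s" "nat k" z, OF series_support] assms(3)
    by (simp add: hpow_def zsmult_def)
next
  case False
  have "z - (- ord le s) \<in> add_monoid_gen (tail_supp le s)" if "hinv le s z \<noteq> 0" for z
    using hinv_support[OF assms(1,2) that] by simp
  then show ?thesis
    using hmul_power_support[of "hinv le s" "- ord le s" _ "nat (- k)" z] assms(3) False
    by (simp add: hpow_def zsmult_def funpow_plus_neg)
qed

section \<open>Injectivity of \<open>\<^bold>f\<close>\<close>

lemma additive_snd: "Modules.additive snd"
  by (simp add: Modules.additive_def)

lemma funpow_plus_additive: "Modules.additive f \<Longrightarrow> f (((+) a ^^ m) 0) = ((+) (f a) ^^ m) 0"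
  by (induction m) (simp_all add: additive.add additive.zero)

lemma zsmult_additive: "Modules.additive f \<Longrightarrow> f (zsmult k a) = zsmult k (f a)"
  unfolding zsmult_def by (simp add: funpow_plus_additive additive.minus)

lemma zsmult_vec: "zsmult k (v :: int ^ 'n) = k *s v"
proof -
  have "((+) v ^^ m) 0 = of_nat m *s v" for m
    by (induction m) (auto simp: vec_eq_iff algebra_simps)
  then show ?thesis unfolding zsmult_def by (auto simp: vec_eq_iff)
qed

lemma int_rows_independent:
  fixes B :: "int ^ 'n::finite ^ 'n" and c :: "int ^ 'n"
  assumes "det B \<noteq> 0" and "(\<Sum>i\<in>UNIV. c $ i *s B $ i) = 0"
  shows "c = 0"
proof -
  define B' :: "real ^ 'n ^ 'n" where "B' = (\<chi> i j. real_of_int (B $ i $ j))"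
  have "det B' = real_of_int (det B)"
    unfolding B'_def det_def by (simp add: of_int_sum of_int_mult of_int_prod)
  then have "\<exists>X. B' ** X = mat 1"
    using assms(1) invertible_det_nz[of B'] unfolding invertible_def by auto
  then have indep: "(\<Sum>i\<in>UNIV. d i *s row i B') = 0 \<Longrightarrow> d i = 0" for d i
    using matrix_right_invertible_independent_rows[of B'] by blast
  have "(\<Sum>i\<in>UNIV. real_of_int (c $ i) *s row i B') = 0"
  proof -
    have "real_of_int (\<Sum>i\<in>UNIV. c $ i * B $ i $ j) = 0" for j
      using arg_cong[OF assms(2), of "\<lambda>v. v $ j"] by simp
    then show ?thesis unfolding B'_def row_def by (simp add: vec_eq_iff of_int_sum)
  qed
  then have "real_of_int (c $ i) = 0" for i
    using indep[of "\<lambda>i. real_of_int (c $ i)"] by simp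
  then show ?thesis by (simp add: vec_eq_iff)
qed

lemma inj_fmap:
  fixes F :: "'n::finite \<Rightarrow> 'g::ab_group_add \<times> (int ^ 'n) \<Rightarrow> 'k::zero"
  assumes "det (\<chi> i j. snd (ord le (F i)) $ j) \<noteq> 0"
  shows "inj (fmap le F)"
proof (rule injI)
  fix p q assume eq: "fmap le F p = fmap le F q"
  obtain g k g' k' where pq: "p = (g, k)" "q = (g', k')" by (cases p, cases q)
  define a where "a i = ord le (F i)" for i
  have fm: "fmap le F (g, k) = (g, 0) + (\<Sum>i\<in>UNIV. zsmult (k $ i) (a i))" for g k
    unfolding fmap_def a_def by simp
  have "snd (fmap le F (g, k)) = snd (fmap le F (g', k'))" using eq pq by simp
  then have "(\<Sum>i\<in>UNIV. k $ i *s snd (a i)) = (\<Sum>i\<in>UNIV. k' $ i *s snd (a i))"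
    unfolding fm by (simp add: snd_sum zsmult_additive[OF additive_snd] zsmult_vec)
  then have "(\<Sum>i\<in>UNIV. (k - k') $ i *s (\<chi> i j. snd (a i) $ j) $ i) = 0"
    by (simp add: vector_sub_rdistrib sum_subtractf)
  then have "k - k' = 0" by (rule int_rows_independent[OF assms[folded a_def]])
  then have "k = k'" by simp
  moreover have "fst (fmap le F (g, k)) = fst (fmap le F (g', k'))" using eq pq by simp
  ultimately show "p = q" unfolding fm pq by (simp add: fst_sum)
qed

lemma fmap_cong: "(\<And>i. ord le (S i) = ord le (F i)) \<Longrightarrow> fmap le S = fmap le F"
  by (simp add: fmap_def)

locale toa_sum = toa le for le :: "'g::ab_group_add \<times> (int ^ 'n::finite) \<Rightarrow> 'g \<times> (int ^ 'n) \<Rightarrow> bool"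
begin

lemma xinit_exp_eq_ord:
  assumes hs: "hahn le s" and nz: "s \<noteq> (\<lambda>_. 0)"
  shows "xinit_exp le s = snd (ord le s)"
proof -
  define om where "om = ord le s"
  have xterm_nz: "xterm s k z \<noteq> 0 \<longleftrightarrow> snd z = k \<and> s z \<noteq> 0" for k z
    unfolding xterm_def by (cases z) auto
  have "hahn le (xterm s k)" for k
  proof -
    have "supp (xterm s k) \<subseteq> supp s" using xterm_nz by (auto simp: supp_def)
    then show ?thesis using hs wo_on_subset unfolding hahn_def by blast
  qed
  then have ord_xterm: "le om (ord le (xterm s k)) \<and> snd (ord le (xterm s k)) = k"
    if "xterm s k \<noteq> (\<lambda>_. 0)" for k
    using coeff_ord_nonzero[OF _ that] xterm_nz ord_least(2)[OF hs] unfolding om_def by blast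
  have om_nz: "s om \<noteq> 0" using coeff_ord_nonzero[OF hs nz] by (simp add: om_def)
  have om_xterm: "ord le (xterm s (snd om)) = om"
    by (rule ord_eqI) (use xterm_nz om_nz ord_least(2)[OF hs] in \<open>auto simp: om_def\<close>)
  have nz_xterm: "xterm s (snd om) \<noteq> (\<lambda>_. 0)"
    using xterm_nz om_nz by metis
  show ?thesis unfolding xinit_exp_def om_def[symmetric]
  proof (rule the_equality)
    fix k assume k: "xterm s k \<noteq> (\<lambda>_. 0) \<and> (\<forall>k'. xterm s k' \<noteq> (\<lambda>_. 0) \<longrightarrow>
        le (ord le (xterm s k)) (ord le (xterm s k')))"
    then have "le (ord le (xterm s k)) om" using nz_xterm om_xterm by metis
    moreover have "le om (ord le (xterm s k))" "snd (ord le (xterm s k)) = k" using ord_xterm k by auto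
    ultimately show "k = snd om" using antisym by metis
  qed (use nz_xterm om_xterm ord_xterm in auto)
qed

end

section \<open>Strict convergence of substitutions\<close>

lemma embG_nonzero_iff: "embG \<phi> x \<noteq> 0 \<longleftrightarrow> snd x = 0 \<and> \<phi> (fst x) \<noteq> 0"
  by (cases x) (simp add: embG_def)

lemma (in toa) strictly_convergesI:
  assumes inj: "inj_on f A" and woA: "wo_on le (f ` A)" and woM: "wo_on le M"
    and supp: "\<And>i z. T i z \<noteq> 0 \<Longrightarrow> \<exists>b\<in>A. \<pi> b = i \<and> z - f b \<in> M"
  shows "strictly_converges le T"
proof -
  have "finite {i. T i z \<noteq> 0}" for z
  proof -
    have "f ` {b \<in> A. z - f b \<in> M} = {w \<in> f ` A. z - w \<in> M}" by auto
    then have "finite {b \<in> A. z - f b \<in> M}"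
      using finite_decompositions[OF woA woM, of z] inj
      by (metis (no_types, lifting) finite_imageD inj_on_subset mem_Collect_eq subsetI)
    moreover have "{i. T i z \<noteq> 0} \<subseteq> \<pi> ` {b \<in> A. z - f b \<in> M}" using supp by blast
    ultimately show ?thesis using finite_subset by blast
  qed
  moreover have "supp (series_sum T) \<subseteq> f ` A + M"
  proof
    fix z assume "z \<in> supp (series_sum T)"
    then obtain i where "T i z \<noteq> 0"
      unfolding supp_def series_sum_def by (metis (mono_tags, lifting) empty_Collect_eq sum.empty mem_Collect_eq)
    then obtain b where "b \<in> A" "z - f b \<in> M" using supp by blast
    then show "z \<in> f ` A + M" using set_plus_intro[of "f b" "f ` A" "z - f b" M] by simp
  qed
  ultimately show ?thesis
    unfolding strictly_converges_def hahn_def using wo_on_set_plus[OF woA woM] wo_on_subset by blast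
qed

context toa_sum
begin

lemma subst_term_support:
  fixes S :: "'n \<Rightarrow> 'g \<times> (int ^ 'n) \<Rightarrow> 'k::field"
  assumes S: "\<And>i. hahn le (S i)" "\<And>i. S i \<noteq> (\<lambda>_. 0)" and "subst_term le \<phi> S k z \<noteq> 0"
  shows "\<exists>g. \<phi> k g \<noteq> 0 \<and> z - fmap le S (g, k) \<in> add_monoid_gen (\<Union>i. tail_supp le (S i))"
proof -
  obtain b where b: "embG (\<phi> k) b \<noteq> 0" "hprod (\<lambda>i. hpow le (S i) (k $ i)) (z - b) \<noteq> 0"
    using hmul_nonzero_imp[OF assms(3)[unfolded subst_term_def]] by blast
  have "z - b - (\<Sum>i\<in>UNIV. zsmult (k $ i) (ord le (S i))) \<in> add_monoid_gen (\<Union>i. tail_supp le (S i))"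
  proof (rule hprod_support[OF _ b(2)])
    fix i z assume "hpow le (S i) (k $ i) z \<noteq> 0"
    then have "z - zsmult (k $ i) (ord le (S i)) \<in> add_monoid_gen (tail_supp le (S i))"
      by (rule hpow_support[OF S(1) S(2)])
    moreover have "add_monoid_gen (tail_supp le (S i)) \<subseteq> add_monoid_gen (\<Union>i. tail_supp le (S i))"
      by (rule add_monoid_gen_mono) blast
    ultimately show "z - zsmult (k $ i) (ord le (S i)) \<in> add_monoid_gen (\<Union>i. tail_supp le (S i))"
      by blast
  qed
  moreover have "b = (fst b, 0)" and "\<phi> k (fst b) \<noteq> 0"
    using b(1) by (simp_all add: embG_nonzero_iff prod_eq_iff)
  moreover from this(1) have "fmap le S (fst b, k) = b + (\<Sum>i\<in>UNIV. zsmult (k $ i) (ord le (S i)))"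
    by (simp add: fmap_def)
  ultimately show ?thesis by (intro exI[of _ "fst b"]) (simp add: diff_diff_eq)
qed

lemma strictly_converges_subst_term:
  fixes S :: "'n \<Rightarrow> 'g \<times> (int ^ 'n) \<Rightarrow> 'k::field"
  assumes S: "\<And>i. hahn le (S i)" "\<And>i. S i \<noteq> (\<lambda>_. 0)" and inj: "inj (fmap le S)"
    and wo: "wo_on le (fmap le S ` {(g, k). \<phi> k g \<noteq> 0})"
  shows "strictly_converges le (subst_term le \<phi> S)"
proof (rule strictly_convergesI[OF inj_on_subset[OF inj] wo])
  show "wo_on le (add_monoid_gen (\<Union>i. tail_supp le (S i)))"
    using tail_supp_pos[OF S(1)] wo_on_tail_supp[OF S(1)]
    by (intro wo_on_add_monoid_gen wo_on_finite_UN) auto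
  show "\<exists>b\<in>{(g, k). \<phi> k g \<noteq> 0}. snd b = k \<and> z - fmap le S b \<in> add_monoid_gen (\<Union>i. tail_supp le (S i))"
    if "subst_term le \<phi> S k z \<noteq> 0" for k z
    using subst_term_support[OF S that] by auto
qed simp

lemma subst_term_hmonom:
  fixes c :: "'n \<Rightarrow> 'k::field"
  assumes "\<And>i. c i \<noteq> 0"
  shows "subst_term le \<phi> (\<lambda>i. hmonom (c i) (a i)) k =
    (\<lambda>z. embG (\<phi> k) (z - (\<Sum>i\<in>UNIV. zsmult (k $ i) (a i))) * (\<Prod>i\<in>UNIV. c i powi (k $ i)))"
  unfolding subst_term_def hpow_hmonom[OF assms] hprod_hmonom hmul_hmonom_right ..

text \<open>As \<open>\<^bold>f\<close> is injective, the summands of \<open>\<Phi>(f)\<close> have pairwise disjoint supports,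
  so no cancellation can occur in the sum.\<close>

lemma wo_on_if_strictly_converges_init_terms:
  fixes F :: "'n \<Rightarrow> 'g \<times> (int ^ 'n) \<Rightarrow> 'k::field"
  assumes F: "\<And>i. hahn le (F i)" "\<And>i. F i \<noteq> (\<lambda>_. 0)" and inj: "inj (fmap le F)"
    and conv: "strictly_converges le (subst_term le \<phi> (\<lambda>i. init_term le (F i)))"
  shows "wo_on le (fmap le F ` {(g, k). \<phi> k g \<noteq> 0})"
proof -
  let ?T = "subst_term le \<phi> (\<lambda>i. init_term le (F i))"
  define P where "P k = (\<Sum>i\<in>UNIV. zsmult (k $ i) (ord le (F i)))" for k
  define C where "C k = (\<Prod>i\<in>UNIV. F i (ord le (F i)) powi (k $ i))" for k
  have C: "C k \<noteq> 0" for k using coeff_ord_nonzero[OF F] by (simp add: C_def)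
  have f: "fmap le F (g, k) = (g, 0) + P k" for g k by (simp add: fmap_def P_def)
  have T: "?T k z = embG (\<phi> k) (z - P k) * C k" for k z
    using subst_term_hmonom[of "\<lambda>i. F i (ord le (F i))", OF coeff_ord_nonzero[OF F]]
    by (simp add: init_term_eq_hmonom P_def C_def)
  have "fmap le F ` {(g, k). \<phi> k g \<noteq> 0} \<subseteq> supp (series_sum ?T)"
  proof
    fix w assume "w \<in> fmap le F ` {(g, k). \<phi> k g \<noteq> 0}"
    then obtain g k where gk: "\<phi> k g \<noteq> 0" "w = fmap le F (g, k)" by auto
    have "{k'. ?T k' w \<noteq> 0} = {k}"
    proof (intro equalityI subsetI)
      fix k' assume "k' \<in> {k'. ?T k' w \<noteq> 0}"
      then have "snd (w - P k') = 0" "\<phi> k' (fst (w - P k')) \<noteq> 0" by (simp_all add: T embG_nonzero_iff)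
      then have "w = fmap le F (fst (w - P k'), k')" by (simp add: f prod_eq_iff)
      then show "k' \<in> {k}" using gk inj by (simp add: inj_eq)
    qed (use gk C in \<open>simp add: T f embG_nonzero_iff\<close>)
    then have "series_sum ?T w = ?T k w" by (simp add: series_sum_def)
    then show "w \<in> supp (series_sum ?T)" using gk C by (simp add: supp_def T f embG_nonzero_iff)
  qed
  then show ?thesis using conv wo_on_subset unfolding strictly_converges_def hahn_def by blast
qed

end

theorem mainTheorem5:
  fixes le :: "'g::ab_group_add \<times> (int ^ 'n::finite) \<Rightarrow> 'g \<times> (int ^ 'n) \<Rightarrow> bool"
    and F :: "'n \<Rightarrow> 'g \<times> (int ^ 'n) \<Rightarrow> 'k::field"
    and \<phi> :: "int ^ 'n \<Rightarrow> 'g \<Rightarrow> 'k"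
  assumes toa: "toa_order le"
    and F_hahn: "\<And>i. hahn le (F i)"
    and F_nz: "\<And>i. F i \<noteq> (\<lambda>_. 0)"
    and jac: "jacobian_number le F \<noteq> 0"
    and \<phi>_hahn: "\<And>k. hahn (\<lambda>g h. le (g, 0) (h, 0)) (\<phi> k)"
  shows "(hahn (\<lambda>a b. le (fmap le F a) (fmap le F b)) (\<lambda>(g, k). \<phi> k g)
          \<longleftrightarrow> strictly_converges le (subst_term le \<phi> (\<lambda>i. init_term le (F i))))
       \<and> (strictly_converges le (subst_term le \<phi> (\<lambda>i. init_term le (F i)))
          \<longrightarrow> strictly_converges le (subst_term le \<phi> F))"
proof -
  interpret toa_sum le using toa_if_toa_order[OF toa] by (simp add: toa_sum_def)
  have inj: "inj (fmap le F)"
    using jac inj_fmap by (simp add: jacobian_number_def xinit_exp_eq_ord F_hahn F_nz)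
  have init: "hahn le (init_term le (F i))" "init_term le (F i) \<noteq> (\<lambda>_. 0)" for i
    by (simp add: init_term_eq_hmonom hahn_hmonom) (rule init_term_nonzero[OF F_hahn F_nz])
  have fmap_init: "fmap le (\<lambda>i. init_term le (F i)) = fmap le F"
    by (rule fmap_cong) (simp add: ord_init_term F_hahn F_nz)
  have "hahn (\<lambda>a b. le (fmap le F a) (fmap le F b)) (\<lambda>(g, k). \<phi> k g)
      \<longleftrightarrow> wo_on le (fmap le F ` {(g, k). \<phi> k g \<noteq> 0})"
    unfolding hahn_def wo_on_pullback_iff by (simp add: supp_def case_prod_unfold)
  moreover have "wo_on le (fmap le F ` {(g, k). \<phi> k g \<noteq> 0})
      \<Longrightarrow> strictly_converges le (subst_term le \<phi> (\<lambda>i. init_term le (F i)))"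
    using strictly_converges_subst_term[OF init] inj fmap_init by simp
  moreover have "strictly_converges le (subst_term le \<phi> (\<lambda>i. init_term le (F i)))
      \<Longrightarrow> wo_on le (fmap le F ` {(g, k). \<phi> k g \<noteq> 0})"
    by (rule wo_on_if_strictly_converges_init_terms[OF F_hahn F_nz inj])
  moreover have "wo_on le (fmap le F ` {(g, k). \<phi> k g \<noteq> 0}) \<Longrightarrow> strictly_converges le (subst_term le \<phi> F)"
    by (rule strictly_converges_subst_term[OF F_hahn F_nz inj])
  ultimately show ?thesis by blast
qed

end
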